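(* Let $N=n+m$ with $n,m\ge 2$, and let $f=x_0p_0+x_1p_1+\cdots+x_np_n+g\in K[x_0,\dots,x_n,u_1,\dots,u_m]_d$ define a Perazzo hypersurface $X=V(f)\subseteq\mathbb{P}^N$ of degree $d\ge 3$. If $X$ is a cone, then $X$ is projectively equivalent to a cone with vertex a point over a Perazzo hypersurface $Y\subseteq\mathbb{P}^{N-1}$ of degree $d$.
   Context: $K$ is an algebraically closed field of characteristic zero. A Perazzo hypersurface $X\subset\mathbb{P}^N$ ($N\ge 4$) of degree $d\ge 3$ is a hypersurface defined by a form $f\in K[x_0,\dots,x_n,u_1,\dots,u_m]$ of the form $f=x_0p_0+x_1p_1+\cdots+x_np_n+g$, where $n,m$ are integers with $n+m=N$, $n,m\ge 2$, the $p_i\in K[u_1,\dots,u_m]_{d-1}$ are algebraically dependent but linearly independent over $K$, and $g\in K[u_1,\dots,u_m]_d$. A hypersurface $V(f)$ is a cone if, after a linear change of the variables, $f$ does not involve one of the variables (equivalently, the partial derivatives of $f$ are linearly dependent). *)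

theory Defs
  imports "HOL-Computational_Algebra.Polynomial"
begin

text \<open>Polynomials over an infinite field are represented by their (polynomial)
  functions; over an infinite field this is a faithful representation.\<close>

definition exps :: "nat set \<Rightarrow> (nat \<Rightarrow> nat) set" where
  "exps V = {\<alpha>. \<forall>i. i \<notin> V \<longrightarrow> \<alpha> i = 0}"

definition is_form :: "nat set \<Rightarrow> nat \<Rightarrow> ((nat \<Rightarrow> 'a::comm_ring_1) \<Rightarrow> 'a) \<Rightarrow> bool" where
  "is_form V d F \<longleftrightarrow> (\<exists>c. \<forall>x. F x =
      (\<Sum>\<alpha>\<in>{\<alpha>\<in>exps V. (\<Sum>i\<in>V. \<alpha> i) = d}. c \<alpha> * (\<Prod>i\<in>V. x i ^ \<alpha> i)))"

definition is_poly :: "nat set \<Rightarrow> ((nat \<Rightarrow> 'a::comm_ring_1) \<Rightarrow> 'a) \<Rightarrow> bool" where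
  "is_poly V F \<longleftrightarrow> (\<exists>D c. \<forall>x. F x =
      (\<Sum>\<alpha>\<in>{\<alpha>\<in>exps V. (\<Sum>i\<in>V. \<alpha> i) \<le> D}. c \<alpha> * (\<Prod>i\<in>V. x i ^ \<alpha> i)))"

definition lin_indep :: "nat \<Rightarrow> (nat \<Rightarrow> (nat \<Rightarrow> 'a::field) \<Rightarrow> 'a) \<Rightarrow> bool" where
  "lin_indep n p \<longleftrightarrow> (\<forall>c. (\<forall>x. (\<Sum>i\<le>n. c i * p i x) = 0) \<longrightarrow> (\<forall>i\<le>n. c i = 0))"

definition alg_dep :: "nat \<Rightarrow> (nat \<Rightarrow> (nat \<Rightarrow> 'a::field) \<Rightarrow> 'a) \<Rightarrow> bool" where
  "alg_dep n p \<longleftrightarrow> (\<exists>P. is_poly {0..n} P \<and> (\<exists>y. P y \<noteq> 0) \<and>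
       (\<forall>x. P (\<lambda>i. p i x) = 0))"

text \<open>Perazzo form in P^(n+m): variables x_0..x_n are indices 0..n,
  variables u_1..u_m are indices n+1..n+m.\<close>
definition perazzo_form :: "nat \<Rightarrow> nat \<Rightarrow> nat \<Rightarrow> ((nat \<Rightarrow> 'a::field) \<Rightarrow> 'a) \<Rightarrow> bool" where
  "perazzo_form n m d F \<longleftrightarrow> 2 \<le> n \<and> 2 \<le> m \<and> 3 \<le> d \<and>
     (\<exists>p g. (\<forall>i\<le>n. is_form {n+1..n+m} (d-1) (p i)) \<and> is_form {n+1..n+m} d g \<and>
        alg_dep n p \<and> lin_indep n p \<and>
        (\<forall>x. F x = (\<Sum>i\<le>n. x i * p i x) + g x))"

definition lin_app :: "nat \<Rightarrow> (nat \<Rightarrow> nat \<Rightarrow> 'a::comm_ring_1) \<Rightarrow> (nat \<Rightarrow> 'a) \<Rightarrow> (nat \<Rightarrow> 'a)" where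
  "lin_app N A x = (\<lambda>i. if i \<le> N then (\<Sum>j\<le>N. A i j * x j) else 0)"

definition invertible_mat :: "nat \<Rightarrow> (nat \<Rightarrow> nat \<Rightarrow> 'a::comm_ring_1) \<Rightarrow> bool" where
  "invertible_mat N A \<longleftrightarrow> (\<exists>B. \<forall>i\<le>N. \<forall>k\<le>N.
      (\<Sum>j\<le>N. A i j * B j k) = (if i = k then 1 else 0) \<and>
      (\<Sum>j\<le>N. B i j * A j k) = (if i = k then 1 else 0))"

definition not_involving :: "nat \<Rightarrow> ((nat \<Rightarrow> 'a) \<Rightarrow> 'b) \<Rightarrow> bool" where
  "not_involving k F \<longleftrightarrow> (\<forall>x t. F (x(k := t)) = F x)"

definition is_cone :: "nat \<Rightarrow> ((nat \<Rightarrow> 'a::comm_ring_1) \<Rightarrow> 'a) \<Rightarrow> bool" where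
  "is_cone N F \<longleftrightarrow> (\<exists>A k. invertible_mat N A \<and> k \<le> N \<and>
       not_involving k (\<lambda>x. F (lin_app N A x)))"

end

theory Submission
  imports Defs "HOL-Combinatorics.Transposition"
begin

text \<open>A cone is invariant under translation by a nonzero vector v, its vertex. Taking the
  finite difference of f in the direction x_i shows that every p_i is v-invariant as well, and v
  must have a nonzero u-component: otherwise f(z + v) - f(z) = \<Sum> v_i p_i(z) would be a linear
  relation among the p_i. A change of coordinates that moves this u-coordinate to the last
  position and sends the last basis vector to v makes f independent of the last variable, and
  what remains is a Perazzo form in n + 1 x-variables and m - 1 u-variables. Here m - 1 \<ge> 2,
  since forms in a single variable are pairwise proportional.\<close>

lemma finite_exps_degree:
  assumes "finite V"
  shows "finite {\<alpha>\<in>exps V. (\<Sum>i\<in>V. \<alpha> i) = d}"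
proof (rule finite_subset)
  show "{\<alpha>\<in>exps V. (\<Sum>i\<in>V. \<alpha> i) = d} \<subseteq> {\<alpha>. \<forall>i. (i \<in> V \<longrightarrow> \<alpha> i \<in> {0..d}) \<and> (i \<notin> V \<longrightarrow> \<alpha> i = 0)}"
    using assms by (auto simp: exps_def member_le_sum)
  show "finite {\<alpha>. \<forall>i. (i \<in> V \<longrightarrow> \<alpha> i \<in> {0..d}) \<and> (i \<notin> V \<longrightarrow> \<alpha> i = (0::nat))}"
    by (rule finite_set_of_finite_funs) (use assms in auto)
qed

lemma is_form_cong:
  assumes "is_form V d F" and "\<And>i. i \<in> V \<Longrightarrow> x i = y i"
  shows "F x = F y"
  using assms unfolding is_form_def by auto

lemma is_form_permute:
  fixes F :: "(nat \<Rightarrow> 'a::comm_ring_1) \<Rightarrow> 'a"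
  assumes F: "is_form V d F"
    and involution: "\<And>i. \<sigma> (\<sigma> i) = i" and stable: "\<And>i. \<sigma> i \<in> V \<longleftrightarrow> i \<in> V"
  shows "is_form V d (\<lambda>x. F (x \<circ> \<sigma>))"
proof -
  let ?S = "{\<alpha>\<in>exps V. (\<Sum>i\<in>V. \<alpha> i) = d}"
  obtain c where c: "\<And>x. F x = (\<Sum>\<alpha>\<in>?S. c \<alpha> * (\<Prod>i\<in>V. x i ^ \<alpha> i))"
    using F unfolding is_form_def by blast
  have bij_V: "bij_betw \<sigma> V V"
    by (rule bij_betw_byWitness[where f'=\<sigma>]) (use stable involution in auto)
  have "(\<lambda>\<alpha>. \<alpha> \<circ> \<sigma>) ` ?S \<subseteq> ?S"
    using stable sum.reindex_bij_betw[OF bij_V] by (auto simp: exps_def)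
  then have bij_S: "bij_betw (\<lambda>\<alpha>. \<alpha> \<circ> \<sigma>) ?S ?S"
    by (intro bij_betw_byWitness[where f'="\<lambda>\<alpha>. \<alpha> \<circ> \<sigma>"]) (auto simp: involution fun_eq_iff)
  have "F (x \<circ> \<sigma>) = (\<Sum>\<alpha>\<in>?S. c (\<alpha> \<circ> \<sigma>) * (\<Prod>i\<in>V. x i ^ \<alpha> i))" for x
  proof -
    have "F (x \<circ> \<sigma>) = (\<Sum>\<alpha>\<in>?S. c \<alpha> * (\<Prod>i\<in>V. x i ^ (\<alpha> \<circ> \<sigma>) i))"
      unfolding c using prod.reindex_bij_betw[OF bij_V, of "\<lambda>i. x i ^ \<alpha> (\<sigma> i)" for \<alpha>]
      by (simp add: involution)
    also have "\<dots> = (\<Sum>\<alpha>\<in>?S. c (\<alpha> \<circ> \<sigma>) * (\<Prod>i\<in>V. x i ^ \<alpha> i))"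
      using sum.reindex_bij_betw[OF bij_S, of "\<lambda>\<beta>. c (\<beta> \<circ> \<sigma>) * (\<Prod>i\<in>V. x i ^ \<beta> i)"]
      by (simp add: comp_assoc o_def involution)
    finally show ?thesis .
  qed
  then show ?thesis unfolding is_form_def by (intro exI[of _ "\<lambda>\<alpha>. c (\<alpha> \<circ> \<sigma>)"]) simp
qed

lemma is_form_set_last_zero:
  fixes F :: "(nat \<Rightarrow> 'a::comm_ring_1) \<Rightarrow> 'a"
  assumes F: "is_form {a..b} d F" and "a < b"
  shows "is_form {a..b-1} d (\<lambda>x. F (x(b := 0)))"
proof -
  let ?S = "{\<alpha>\<in>exps {a..b}. (\<Sum>i\<in>{a..b}. \<alpha> i) = d}"
  obtain c where c: "\<And>x. F x = (\<Sum>\<alpha>\<in>?S. c \<alpha> * (\<Prod>i\<in>{a..b}. x i ^ \<alpha> i))"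
    using F unfolding is_form_def by blast
  have split: "{a..b} = insert b {a..b-1}" and b_notin: "b \<notin> {a..b-1}"
    using \<open>a < b\<close> by auto
  have restricted: "{\<alpha>\<in>exps {a..b-1}. (\<Sum>i\<in>{a..b-1}. \<alpha> i) = d} = {\<alpha>\<in>?S. \<alpha> b = 0}"
    unfolding exps_def split using b_notin \<open>a < b\<close> by auto metis
  have unaffected: "(\<Prod>i\<in>{a..b-1}. (x(b := 0)) i ^ \<alpha> i) = (\<Prod>i\<in>{a..b-1}. x i ^ \<alpha> i)" for x \<alpha>
    using b_notin by (intro prod.cong) auto
  have "F (x(b := 0)) = (\<Sum>\<alpha>\<in>?S. if \<alpha> b = 0 then c \<alpha> * (\<Prod>i\<in>{a..b-1}. x i ^ \<alpha> i) else 0)" for x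
    unfolding c split using b_notin
    by (intro sum.cong) (auto simp: power_0_left unaffected)
  also have "\<dots> x = (\<Sum>\<alpha>\<in>{\<alpha>\<in>?S. \<alpha> b = 0}. c \<alpha> * (\<Prod>i\<in>{a..b-1}. x i ^ \<alpha> i))" for x
    by (rule sum.inter_filter[symmetric]) (simp add: finite_exps_degree)
  finally show ?thesis unfolding is_form_def restricted by blast
qed

lemma is_form_transpose_set_last_zero:
  fixes F :: "(nat \<Rightarrow> 'a::comm_ring_1) \<Rightarrow> 'a"
  assumes F: "is_form {a..b} d F" and "j \<in> {a..b}" and "a < b"
  shows "is_form {a..b-1} d (\<lambda>x. F (x(b := 0) \<circ> Transposition.transpose j b))"
proof -
  have "is_form {a..b} d (\<lambda>y. F (y \<circ> Transposition.transpose j b))"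
    using \<open>j \<in> {a..b}\<close>
    by (intro is_form_permute[OF F]) (auto simp: Transposition.transpose_def)
  from is_form_set_last_zero[OF this \<open>a < b\<close>] show ?thesis .
qed

lemma is_form_one_variable:
  fixes F :: "(nat \<Rightarrow> 'a::comm_ring_1) \<Rightarrow> 'a"
  assumes "is_form {a..a} d F"
  obtains c where "\<And>x. F x = c * x a ^ d"
proof -
  obtain c where c: "\<And>x. F x = (\<Sum>\<alpha>\<in>{\<alpha>\<in>exps {a..a}. (\<Sum>i\<in>{a..a}. \<alpha> i) = d}. c \<alpha> * (\<Prod>i\<in>{a..a}. x i ^ \<alpha> i))"
    using assms unfolding is_form_def by blast
  have "{\<alpha>\<in>exps {a..a}. (\<Sum>i\<in>{a..a}. \<alpha> i) = d} = {\<lambda>j. if j = a then d else 0}"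
    by (auto simp: exps_def fun_eq_iff)
  then show ?thesis using c that by auto
qed

lemma lin_indep_first_two:
  fixes p :: "nat \<Rightarrow> (nat \<Rightarrow> 'a::field) \<Rightarrow> 'a"
  assumes "lin_indep n p" and "1 \<le> n" and "\<And>x. a * p 0 x + b * p 1 x = 0"
  shows "a = 0 \<and> b = 0"
proof -
  let ?c = "\<lambda>i. if i = 0 then a else if i = 1 then b else 0"
  have "(\<Sum>i\<le>n. ?c i * p i x) = 0" for x
  proof -
    have "(\<Sum>i\<le>n. ?c i * p i x) = (\<Sum>i\<le>n. (if i = 0 then a * p i x else 0) + (if i = 1 then b * p i x else 0))"
      by (intro sum.cong) auto
    also have "\<dots> = a * p 0 x + b * p 1 x"
      using \<open>1 \<le> n\<close> by (simp add: sum.distrib)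
    finally show ?thesis using assms(3) by simp
  qed
  then have "\<forall>i\<le>n. ?c i = 0"
    using assms(1) unfolding lin_indep_def by (blast dest: spec[of _ ?c])
  from this[rule_format, of 0] this[rule_format, of 1] show ?thesis
    using \<open>1 \<le> n\<close> by simp
qed

lemma lin_indep_one_variable_forms:
  fixes p :: "nat \<Rightarrow> (nat \<Rightarrow> 'a::field) \<Rightarrow> 'a"
  assumes indep: "lin_indep n p" and forms: "\<And>i. i \<le> n \<Longrightarrow> is_form {a..a} e (p i)"
  shows "n = 0"
proof (rule ccontr)
  assume "n \<noteq> 0"
  then have "1 \<le> n" by simp
  obtain c0 where c0: "\<And>x. p 0 x = c0 * x a ^ e" using is_form_one_variable forms by blast
  obtain c1 where c1: "\<And>x. p 1 x = c1 * x a ^ e" using is_form_one_variable forms \<open>1 \<le> n\<close> by blast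
  have "c1 * p 0 x + (- c0) * p 1 x = 0" for x unfolding c0 c1 by (simp add: algebra_simps)
  then have "- c0 = 0" using lin_indep_first_two[OF indep \<open>1 \<le> n\<close>] by blast
  then have "1 * p 0 x + 0 * p 1 x = 0" for x unfolding c0 by simp
  then have "(1::'a) = 0" using lin_indep_first_two[OF indep \<open>1 \<le> n\<close>] by blast
  then show False by simp
qed

lemma lin_indep_reparametrize:
  assumes "lin_indep n p" and "\<And>z. \<exists>x. \<forall>i\<le>n. p i z = q i x"
  shows "lin_indep n q"
  unfolding lin_indep_def
proof (rule allI, rule impI)
  fix c assume "\<forall>x. (\<Sum>i\<le>n. c i * q i x) = 0"
  then have "(\<Sum>i\<le>n. c i * p i z) = 0" for z
  proof -
    obtain x where "\<forall>i\<le>n. p i z = q i x" using assms(2) by blast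
    then have "(\<Sum>i\<le>n. c i * p i z) = (\<Sum>i\<le>n. c i * q i x)" by simp
    with \<open>\<forall>x. (\<Sum>i\<le>n. c i * q i x) = 0\<close> show ?thesis by simp
  qed
  then show "\<forall>i\<le>n. c i = 0" using assms(1) unfolding lin_indep_def by blast
qed

lemma alg_dep_compose:
  assumes "alg_dep n p"
  shows "alg_dep n (\<lambda>i x. p i (\<phi> x))"
  using assms unfolding alg_dep_def by blast

lemma lin_app_update_add:
  assumes "k \<le> N"
  shows "lin_app N A (x(k := x k + t)) i = lin_app N A x i + (if i \<le> N then t * A i k else 0)"
proof -
  have "(\<Sum>j\<le>N. A i j * (x(k := x k + t)) j) = (\<Sum>j\<le>N. A i j * x j + (if j = k then t * A i k else 0))"
    by (rule sum.cong) (auto simp: algebra_simps)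
  also have "\<dots> = (\<Sum>j\<le>N. A i j * x j) + t * A i k"
    using assms by (simp add: sum.distrib)
  finally show ?thesis by (simp add: lin_app_def)
qed

lemma lin_app_two_entries_per_row:
  fixes a b :: "nat \<Rightarrow> 'a::comm_ring_1"
  assumes "\<And>r. r \<le> N \<Longrightarrow> s r \<le> N" and "\<And>r. r \<le> N \<Longrightarrow> t r \<le> N"
  shows "lin_app N (\<lambda>r c. a r * (if c = s r then 1 else 0) + b r * (if c = t r then 1 else 0)) x r
     = (if r \<le> N then a r * x (s r) + b r * x (t r) else 0)"
proof (cases "r \<le> N")
  case True
  have "(\<Sum>c\<le>N. (a r * (if c = s r then 1 else 0) + b r * (if c = t r then 1 else 0)) * x c)
     = (\<Sum>c\<le>N. (if c = s r then a r * x c else 0) + (if c = t r then b r * x c else 0))"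
    by (rule sum.cong) (auto simp: algebra_simps)
  also have "\<dots> = a r * x (s r) + b r * x (t r)"
    using assms True by (simp add: sum.distrib)
  finally show ?thesis using True by (simp add: lin_app_def)
qed (simp add: lin_app_def)

lemma lin_app_lin_app:
  "lin_app N A (lin_app N B x) i
     = (if i \<le> N then \<Sum>l\<le>N. (\<Sum>j\<le>N. A i j * B j l) * x l else 0)"
proof -
  have "(\<Sum>j\<le>N. A i j * (\<Sum>l\<le>N. B j l * x l)) = (\<Sum>j\<le>N. \<Sum>l\<le>N. A i j * B j l * x l)"
    by (simp add: sum_distrib_left mult.assoc)
  also have "\<dots> = (\<Sum>l\<le>N. \<Sum>j\<le>N. A i j * B j l * x l)"
    by (rule sum.swap)
  also have "\<dots> = (\<Sum>l\<le>N. (\<Sum>j\<le>N. A i j * B j l) * x l)"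
    by (simp add: sum_distrib_right)
  finally show ?thesis by (simp add: lin_app_def)
qed

lemma invertible_matI:
  fixes A B :: "nat \<Rightarrow> nat \<Rightarrow> 'a::comm_ring_1"
  assumes AB: "\<And>z r. r \<le> N \<Longrightarrow> lin_app N A (lin_app N B z) r = z r"
    and BA: "\<And>z r. r \<le> N \<Longrightarrow> lin_app N B (lin_app N A z) r = z r"
  shows "invertible_mat N A"
proof -
  have product: "(\<Sum>j\<le>N. C i j * D j k) = (if i = k then 1 else 0)"
    if CD: "\<And>z r. r \<le> N \<Longrightarrow> lin_app N C (lin_app N D z) r = z r" and "i \<le> N" "k \<le> N"
    for C D :: "nat \<Rightarrow> nat \<Rightarrow> 'a" and i k
    using CD[of i "\<lambda>j. if j = k then 1 else 0"] \<open>i \<le> N\<close> \<open>k \<le> N\<close>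
    by (simp add: lin_app_lin_app if_distrib cong: if_cong)
  show ?thesis unfolding invertible_mat_def
    by (rule exI[of _ B]) (use product[OF AB] product[OF BA] in auto)
qed

lemma invertible_mat_lin_app_surj:
  assumes "invertible_mat N A"
  obtains x where "\<And>r. r \<le> N \<Longrightarrow> lin_app N A x r = z r"
proof -
  obtain B where B: "\<And>i l. i \<le> N \<Longrightarrow> l \<le> N \<Longrightarrow> (\<Sum>j\<le>N. A i j * B j l) = (if i = l then 1 else 0)"
    using assms unfolding invertible_mat_def by blast
  have "lin_app N A (lin_app N B z) r = z r" if "r \<le> N" for r
    using that by (simp add: lin_app_lin_app B if_distrib[of "\<lambda>c. c * _"] cong: if_cong)
  then show ?thesis using that by blast
qed

lemma invertible_mat_column_nonzero:
  assumes "invertible_mat N A" and "k \<le> N"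
  shows "\<exists>i\<le>N. A i k \<noteq> 0"
proof (rule ccontr)
  assume "\<not> ?thesis"
  obtain B where "(\<Sum>j\<le>N. B k j * A j k) = 1"
    using assms unfolding invertible_mat_def by fastforce
  with \<open>\<not> ?thesis\<close> show False by simp
qed

lemma vertex_to_last_coordinate:
  fixes v :: "nat \<Rightarrow> 'a::field"
  assumes "j \<le> N" and "v j \<noteq> 0" and "\<forall>i>N. v i = 0"
  obtains M where "invertible_mat N M"
    and "\<And>x r. lin_app N M x r
           = (if r \<le> N then (x(N := 0) \<circ> Transposition.transpose j N) r else 0) + x N * v r"
proof -
  define \<sigma> where "\<sigma> = Transposition.transpose j N"
  have \<sigma>_le: "\<sigma> r \<le> N" if "r \<le> N" for r
    using that \<open>j \<le> N\<close> by (simp add: \<sigma>_def Transposition.transpose_def)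
  have \<sigma>_\<sigma>: "\<sigma> (\<sigma> r) = r" and \<sigma>_eq_N: "\<sigma> r = N \<longleftrightarrow> r = j" and \<sigma>_eq_j: "\<sigma> r = j \<longleftrightarrow> r = N" for r
    by (auto simp: \<sigma>_def Transposition.transpose_eq_iff)
  define M where "M = (\<lambda>r c. (if r = j then 0 else 1) * (if c = \<sigma> r then 1 else 0)
                              + v r * (if c = N then (1::'a) else 0))"
  define B where "B = (\<lambda>r c. (if r = N then 1 / v j else 1) * (if c = (if r = N then j else \<sigma> r) then 1 else 0)
                              + (if r = N then 0 else - v (\<sigma> r) / v j) * (if c = j then (1::'a) else 0))"
  have M_app: "lin_app N M x r = (if r \<le> N then (if r = j then 0 else 1) * x (\<sigma> r) + v r * x N else 0)" for x r
    unfolding M_def by (rule lin_app_two_entries_per_row) (use \<sigma>_le in auto)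
  have B_app: "lin_app N B x r = (if r \<le> N then (if r = N then 1 / v j else 1) * x (if r = N then j else \<sigma> r)
                 + (if r = N then 0 else - v (\<sigma> r) / v j) * x j else 0)" for x r
    unfolding B_def by (rule lin_app_two_entries_per_row) (use \<sigma>_le \<open>j \<le> N\<close> in auto)
  have "invertible_mat N M"
  proof (rule invertible_matI)
    show "lin_app N M (lin_app N B z) r = z r" if "r \<le> N" for z r
      using that \<open>j \<le> N\<close> \<open>v j \<noteq> 0\<close> \<sigma>_le[OF that]
      by (cases "r = j") (simp_all add: M_app B_app \<sigma>_\<sigma> \<sigma>_eq_N \<sigma>_eq_j field_simps)
    show "lin_app N B (lin_app N M z) r = z r" if "r \<le> N" for z r
      using that \<open>j \<le> N\<close> \<open>v j \<noteq> 0\<close> \<sigma>_le[OF that]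
      by (cases "r = N") (simp_all add: M_app B_app \<sigma>_\<sigma> \<sigma>_eq_N \<sigma>_eq_j field_simps)
  qed
  moreover have "lin_app N M x r
      = (if r \<le> N then (x(N := 0) \<circ> \<sigma>) r else 0) + x N * v r" for x r
    using assms(3) by (auto simp: M_app \<sigma>_eq_N not_le)
  ultimately show ?thesis using that unfolding \<sigma>_def by blast
qed

lemma is_cone_translation_invariant:
  fixes F :: "(nat \<Rightarrow> 'a::field) \<Rightarrow> 'a"
  assumes "is_cone N F" and F_cong: "\<And>x y. (\<And>j. j \<le> N \<Longrightarrow> x j = y j) \<Longrightarrow> F x = F y"
  obtains v where "\<exists>i\<le>N. v i \<noteq> 0" and "\<forall>i>N. v i = 0" and "\<And>z t. F (\<lambda>i. z i + t * v i) = F z"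
proof -
  obtain A k where A: "invertible_mat N A" "k \<le> N"
    and vertex_free: "\<And>x t. F (lin_app N A (x(k := t))) = F (lin_app N A x)"
    using assms(1) unfolding is_cone_def not_involving_def by blast
  define v where "v i = (if i \<le> N then A i k else 0)" for i
  have "F (\<lambda>i. z i + t * v i) = F z" for z t
  proof -
    obtain y where y: "\<And>r. r \<le> N \<Longrightarrow> lin_app N A y r = z r"
      using invertible_mat_lin_app_surj[OF A(1)] by blast
    have "F (\<lambda>i. z i + t * v i) = F (lin_app N A (y(k := y k + t)))"
      by (rule F_cong) (simp add: lin_app_update_add[OF A(2)] y v_def mult.commute)
    also have "\<dots> = F (lin_app N A y)" by (rule vertex_free)
    also have "\<dots> = F z" by (rule F_cong) (simp add: y)
    finally show ?thesis .
  qed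
  moreover have "\<exists>i\<le>N. v i \<noteq> 0"
    using invertible_mat_column_nonzero[OF A] by (auto simp: v_def)
  ultimately show ?thesis using that by (auto simp: v_def)
qed

locale perazzo_expansion =
  fixes n m d :: nat and f :: "(nat \<Rightarrow> 'a::field) \<Rightarrow> 'a"
    and p :: "nat \<Rightarrow> (nat \<Rightarrow> 'a) \<Rightarrow> 'a" and g :: "(nat \<Rightarrow> 'a) \<Rightarrow> 'a"
  assumes p_form: "\<And>i. i \<le> n \<Longrightarrow> is_form {n+1..n+m} (d-1) (p i)"
    and g_form: "is_form {n+1..n+m} d g"
    and f_eq: "\<And>x. f x = (\<Sum>i\<le>n. x i * p i x) + g x"
begin

lemma f_cong:
  assumes "\<And>j. j \<le> n + m \<Longrightarrow> x j = y j"
  shows "f x = f y"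
proof -
  have "p i x = p i y" if "i \<le> n" for i
    using assms by (intro is_form_cong[OF p_form[OF that]]) auto
  moreover have "g x = g y"
    using assms by (intro is_form_cong[OF g_form]) auto
  ultimately show ?thesis using assms by (simp add: f_eq)
qed

lemma f_update_add_one:
  assumes "i \<le> n"
  shows "f (w(i := w i + 1)) = f w + p i w"
proof -
  have p_eq: "p l (w(i := w i + 1)) = p l w" if "l \<le> n" for l
    using assms by (intro is_form_cong[OF p_form[OF that]]) auto
  have g_eq: "g (w(i := w i + 1)) = g w"
    using assms by (intro is_form_cong[OF g_form]) auto
  have "(\<Sum>l\<le>n. (w(i := w i + 1)) l * p l (w(i := w i + 1)))
      = (\<Sum>l\<le>n. w l * p l w + (if l = i then p l w else 0))"
    by (intro sum.cong) (auto simp: p_eq ring_distribs)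
  also have "\<dots> = (\<Sum>l\<le>n. w l * p l w) + p i w"
    using assms by (simp add: sum.distrib)
  finally show ?thesis by (simp add: f_eq g_eq)
qed

(* p_i w = f (w + e_i) - f w, and translation by v commutes with this difference. *)
lemma p_translation_invariant:
  assumes invariant: "\<And>z t. f (\<lambda>i. z i + t * v i) = f z" and "i \<le> n"
  shows "p i (\<lambda>j. z j + t * v j) = p i z"
proof -
  let ?z' = "z(i := z i + 1)"
  have "(\<lambda>j. z j + t * v j)(i := z i + t * v i + 1) = (\<lambda>j. ?z' j + t * v j)"
    by (auto simp: fun_eq_iff)
  then have "f (\<lambda>j. z j + t * v j) + p i (\<lambda>j. z j + t * v j) = f (\<lambda>j. ?z' j + t * v j)"
    using f_update_add_one[OF \<open>i \<le> n\<close>, of "\<lambda>j. z j + t * v j"] by simp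
  also have "\<dots> = f z + p i z"
    by (simp only: invariant f_update_add_one[OF \<open>i \<le> n\<close>])
  finally show ?thesis by (simp add: invariant)
qed

lemma translation_direction_meets_u:
  assumes "lin_indep n p" and invariant: "\<And>z t. f (\<lambda>i. z i + t * v i) = f z"
    and "\<exists>i\<le>n+m. v i \<noteq> 0"
  shows "\<exists>j. n < j \<and> j \<le> n + m \<and> v j \<noteq> 0"
proof (rule ccontr)
  assume "\<not> ?thesis"
  then have v_u: "\<And>j. n < j \<Longrightarrow> j \<le> n + m \<Longrightarrow> v j = 0"
    by blast
  \<comment> \<open>a translation in the x-directions only changes f by the linear combination \<Sum> v_l p_l\<close>
  have "(\<Sum>l\<le>n. v l * p l z) = 0" for z
  proof -
    have p_eq: "p l (\<lambda>j. z j + v j) = p l z" if "l \<le> n" for l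
      using v_u by (intro is_form_cong[OF p_form[OF that]]) auto
    have g_eq: "g (\<lambda>j. z j + v j) = g z"
      using v_u by (intro is_form_cong[OF g_form]) auto
    have "f (\<lambda>j. z j + v j) = f z + (\<Sum>l\<le>n. v l * p l z)"
      by (simp add: f_eq p_eq g_eq distrib_right sum.distrib)
    then show ?thesis using invariant[of z 1] by simp
  qed
  then have "\<forall>l\<le>n. v l = 0"
    using assms(1) unfolding lin_indep_def by blast
  moreover obtain i where "i \<le> n + m" "v i \<noteq> 0"
    using assms(3) by blast
  ultimately show False using v_u by (cases "i \<le> n") auto
qed

lemma eliminate_vertex:
  assumes "2 \<le> n" "2 \<le> m" "3 \<le> d" and "alg_dep n p" "lin_indep n p"
    and "\<exists>i\<le>n+m. v i \<noteq> 0" "\<forall>i>n+m. v i = 0"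
    and invariant: "\<And>z t. f (\<lambda>i. z i + t * v i) = f z"
  shows "\<exists>M. invertible_mat (n+m) M \<and> perazzo_form n (m-1) d (\<lambda>x. f (lin_app (n+m) M x))"
proof -
  let ?N = "n + m"
  obtain j where j: "n < j" "j \<le> ?N" "v j \<noteq> 0"
    using translation_direction_meets_u assms(5,6) invariant by blast
  let ?\<sigma> = "Transposition.transpose j ?N"
  define W where "W (x :: nat \<Rightarrow> 'a) r = (if r \<le> ?N then (x(?N := 0) \<circ> ?\<sigma>) r else 0)" for x r
  obtain M where M_inv: "invertible_mat ?N M"
    and M_app': "\<And>x r. lin_app ?N M x r = W x r + x ?N * v r"
    using vertex_to_last_coordinate[of j ?N v] j assms(7) unfolding W_def by blast
  have M_app: "lin_app ?N M x = (\<lambda>r. W x r + x ?N * v r)" for x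
    using M_app' by blast
  have p_M: "p i (lin_app ?N M x) = p i (W x)" if "i \<le> n" for i x
    unfolding M_app by (rule p_translation_invariant[OF invariant that])
  have W_low: "W x i = x i" if "i \<le> n" for x i
    using that j by (simp add: W_def)
  have W_form: "is_form {n+1..n+(m-1)} D (\<lambda>x. F (W x))" if F: "is_form {n+1..?N} D F" for D F
  proof -
    have "is_form {n+1..?N-1} D (\<lambda>x. F (x(?N := 0) \<circ> ?\<sigma>))"
      using j \<open>2 \<le> m\<close> by (intro is_form_transpose_set_last_zero[OF F]) auto
    moreover have "F (W x) = F (x(?N := 0) \<circ> ?\<sigma>)" for x
      by (rule is_form_cong[OF F]) (simp add: W_def)
    ultimately show ?thesis using \<open>2 \<le> m\<close> by (simp add: Suc_diff_le)
  qed
  define p' where "p' i x = p i (W x)" for i x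
  have p'_form: "is_form {n+1..n+(m-1)} (d-1) (p' i)" if "i \<le> n" for i
    unfolding p'_def by (rule W_form[OF p_form[OF that]])
  have "lin_indep n p'"
  proof (rule lin_indep_reparametrize[OF \<open>lin_indep n p\<close>])
    fix z
    obtain x where "\<And>r. r \<le> ?N \<Longrightarrow> lin_app ?N M x r = z r"
      using invertible_mat_lin_app_surj[OF M_inv] by blast
    then have "p i z = p' i x" if "i \<le> n" for i
      using p_M[OF that] is_form_cong[OF p_form[OF that], of z "lin_app ?N M x"]
      by (simp add: p'_def)
    then show "\<exists>x. \<forall>i\<le>n. p i z = p' i x" by blast
  qed
  moreover have "2 \<le> m - 1"
  proof (rule ccontr)
    assume "\<not> 2 \<le> m - 1"
    then have "n + (m - 1) = n + 1" using \<open>2 \<le> m\<close> by simp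
    then have "n = 0"
      using lin_indep_one_variable_forms[OF \<open>lin_indep n p'\<close>, of "n+1" "d-1"] p'_form by simp
    with \<open>2 \<le> n\<close> show False by simp
  qed
  moreover have "f (lin_app ?N M x) = (\<Sum>i\<le>n. x i * p' i x) + g (W x)" for x
    using invariant[of "W x" "x ?N"] by (simp add: M_app f_eq W_low p'_def)
  moreover have "alg_dep n p'"
    unfolding p'_def by (rule alg_dep_compose[OF \<open>alg_dep n p\<close>])
  ultimately have "perazzo_form n (m-1) d (\<lambda>x. f (lin_app ?N M x))"
    unfolding perazzo_form_def using assms(1,3) p'_form W_form[OF g_form]
    by (intro conjI exI[of _ p'] exI[of _ "\<lambda>x. g (W x)"]) auto
  with M_inv show ?thesis by blast
qed

end

theorem mainTheorem1:
  fixes f :: "(nat \<Rightarrow> 'a::{alg_closed_field, field_char_0}) \<Rightarrow> 'a"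
    and n m d N :: nat
  assumes "N = n + m"
    and "perazzo_form n m d f"
    and "is_cone N f"
  shows "\<exists>A c n' m' h. invertible_mat N A \<and> c \<noteq> 0 \<and> n' + m' = N - 1 \<and>
           perazzo_form n' m' d h \<and>
           (\<forall>x. f (lin_app N A x) = c * h x)"
proof -
  obtain p g where bounds: "2 \<le> n" "2 \<le> m" "3 \<le> d"
    and "\<forall>i\<le>n. is_form {n+1..n+m} (d-1) (p i)" "is_form {n+1..n+m} d g"
    and dependent: "alg_dep n p" and independent: "lin_indep n p"
    and "\<forall>x. f x = (\<Sum>i\<le>n. x i * p i x) + g x"
    using assms(2) unfolding perazzo_form_def by blast
  then interpret perazzo_expansion n m d f p g
    by unfold_locales auto
  obtain v where "\<exists>i\<le>N. v i \<noteq> 0" "\<forall>i>N. v i = 0" "\<And>z t. f (\<lambda>i. z i + t * v i) = f z"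
    using is_cone_translation_invariant[OF assms(3)] f_cong assms(1) by blast
  then obtain M where "invertible_mat N M" "perazzo_form n (m-1) d (\<lambda>x. f (lin_app N M x))"
    using eliminate_vertex[OF bounds dependent independent] assms(1) by blast
  moreover have "n + (m - 1) = N - 1"
    using assms(1) \<open>2 \<le> m\<close> by simp
  ultimately show ?thesis
    by (intro exI[of _ M] exI[of _ 1] exI[of _ n] exI[of _ "m-1"]) auto
qed

end
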